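(* For all real numbers $a,b,c>0$, \[ \frac{abc(a+b+c)^3}{3(ab+bc+ca)(a^3c+ab^3+bc^3)}\leq 1. \] *)

theory Defs
  imports Complex_Main
begin

end

theory Submission
  imports Defs
begin

text \<open>Clearing the denominator, the claim is a polynomial inequality, and the difference of its
two sides is a sum of squares plus a multiple of \<open>abc(a+b+c)\<close>, which is positive.\<close>

lemma cyclic_quartic_sos_identity:
  fixes a b c :: "'a :: field_char_0"
  shows "3 * (a * b + b * c + c * a) * (a ^ 3 * c + a * b ^ 3 + b * c ^ 3) - a * b * c * (a + b + c) ^ 3
       = 3 / 2 * ((a * b\<^sup>2 - b * c\<^sup>2)\<^sup>2 + (b * c\<^sup>2 - c * a\<^sup>2)\<^sup>2 + (c * a\<^sup>2 - a * b\<^sup>2)\<^sup>2)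
         + a * b * c * (a + b + c) * ((a - b)\<^sup>2 + (b - c)\<^sup>2 + (c - a)\<^sup>2)"
  by (simp add: field_simps power2_eq_square power3_eq_cube)

lemma cyclic_quartic_le:
  fixes a b c :: real
  assumes "a \<ge> 0" and "b \<ge> 0" and "c \<ge> 0"
  shows "a * b * c * (a + b + c) ^ 3 \<le> 3 * (a * b + b * c + c * a) * (a ^ 3 * c + a * b ^ 3 + b * c ^ 3)"
proof -
  have "0 \<le> a * b * c * (a + b + c) * ((a - b)\<^sup>2 + (b - c)\<^sup>2 + (c - a)\<^sup>2)"
    using assms by simp
  moreover have "0 \<le> 3 / 2 * ((a * b\<^sup>2 - b * c\<^sup>2)\<^sup>2 + (b * c\<^sup>2 - c * a\<^sup>2)\<^sup>2 + (c * a\<^sup>2 - a * b\<^sup>2)\<^sup>2)"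
    by simp
  ultimately show ?thesis
    using cyclic_quartic_sos_identity[of a b c] by linarith
qed

theorem mainTheorem3:
  fixes a b c :: real
  assumes "a > 0" and "b > 0" and "c > 0"
  shows "a * b * c * (a + b + c) ^ 3 / (3 * (a * b + b * c + c * a) * (a ^ 3 * c + a * b ^ 3 + b * c ^ 3)) \<le> 1"
proof -
  have "0 < 3 * (a * b + b * c + c * a) * (a ^ 3 * c + a * b ^ 3 + b * c ^ 3)"
    using assms by (intro mult_pos_pos add_pos_pos) auto
  then show ?thesis
    using cyclic_quartic_le[of a b c] assms by simp
qed

end
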